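(* For every hereditary graph class $\mathscr{C}$ of bounded shrubdepth there exists a first-order sentence $\varphi_{\mathscr{C}}$ (over the signature of graphs with one binary adjacency relation) such that for every graph $G$, $G\in\mathscr{C}$ if and only if $G\models\varphi_{\mathscr{C}}$.
   Context: All graphs are finite, simple, undirected. A class is hereditary if closed under taking induced subgraphs. A tree-model of a graph $G$ consists of a finite label set $\Lambda$, a labelling $\lambda:V(G)\to\Lambda$, a rooted tree $T$ with leaf set $V(G)$, and for each non-leaf node $t$ a symmetric $M_t:\Lambda\times\Lambda\to\{0,1\}$, such that distinct $u,v$ are adjacent iff $M_t(\lambda(u),\lambda(v))=1$ for $t$ the lowest common ancestor of $u,v$ in $T$. A class $\mathscr{C}$ has bounded shrubdepth if there are $d,m\in\mathbb{N}$ such that every graph of $\mathscr{C}$ has a tree-model of depth at most $d$ using at most $m$ labels. *)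

theory Defs
  imports Main
begin

type_synonym 'a graph = "'a set \<times> ('a \<Rightarrow> 'a \<Rightarrow> bool)"

definition verts :: "'a graph \<Rightarrow> 'a set" where
  "verts G = fst G"

definition adj :: "'a graph \<Rightarrow> 'a \<Rightarrow> 'a \<Rightarrow> bool" where
  "adj G = snd G"

definition graph :: "'a graph \<Rightarrow> bool" where
  "graph G \<longleftrightarrow> finite (verts G) \<and>
     (\<forall>u v. adj G u v \<longrightarrow> u \<in> verts G \<and> v \<in> verts G \<and> u \<noteq> v \<and> adj G v u)"

definition induced_subgraph :: "'a graph \<Rightarrow> 'a graph \<Rightarrow> bool" where
  "induced_subgraph H G \<longleftrightarrow> verts H \<subseteq> verts G \<and>
     adj H = (\<lambda>u v. u \<in> verts H \<and> v \<in> verts H \<and> adj G u v)"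

definition graph_iso :: "('a \<Rightarrow> 'b) \<Rightarrow> 'a graph \<Rightarrow> 'b graph \<Rightarrow> bool" where
  "graph_iso f G H \<longleftrightarrow> bij_betw f (verts G) (verts H) \<and>
     (\<forall>u\<in>verts G. \<forall>v\<in>verts G. adj G u v \<longleftrightarrow> adj H (f u) (f v))"

definition hereditary :: "nat graph set \<Rightarrow> bool" where
  "hereditary C \<longleftrightarrow> (\<forall>G\<in>C. graph G) \<and>
     (\<forall>G H f. G \<in> C \<and> graph H \<and> graph_iso f G H \<longrightarrow> H \<in> C) \<and>
     (\<forall>G H. G \<in> C \<and> induced_subgraph H G \<longrightarrow> H \<in> C)"

definition rooted_tree :: "'n set \<Rightarrow> 'n \<Rightarrow> ('n \<Rightarrow> 'n) \<Rightarrow> bool" where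
  "rooted_tree N r p \<longleftrightarrow> finite N \<and> r \<in> N \<and>
     (\<forall>x\<in>N. x \<noteq> r \<longrightarrow> p x \<in> N) \<and>
     (\<forall>x\<in>N. \<exists>k. (p ^^ k) x = r)"

definition node_depth :: "'n \<Rightarrow> ('n \<Rightarrow> 'n) \<Rightarrow> 'n \<Rightarrow> nat" where
  "node_depth r p x = (LEAST k. (p ^^ k) x = r)"

definition ancestors :: "'n \<Rightarrow> ('n \<Rightarrow> 'n) \<Rightarrow> 'n \<Rightarrow> 'n set" where
  "ancestors r p x = {(p ^^ k) x | k. k \<le> node_depth r p x}"

definition children :: "'n set \<Rightarrow> 'n \<Rightarrow> ('n \<Rightarrow> 'n) \<Rightarrow> 'n \<Rightarrow> 'n set" where
  "children N r p t = {x \<in> N. x \<noteq> r \<and> p x = t}"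

definition is_leaf :: "'n set \<Rightarrow> 'n \<Rightarrow> ('n \<Rightarrow> 'n) \<Rightarrow> 'n \<Rightarrow> bool" where
  "is_leaf N r p t \<longleftrightarrow> t \<in> N \<and> children N r p t = {}"

definition lca :: "'n \<Rightarrow> ('n \<Rightarrow> 'n) \<Rightarrow> 'n \<Rightarrow> 'n \<Rightarrow> 'n" where
  "lca r p x y = (THE z. z \<in> ancestors r p x \<inter> ancestors r p y \<and>
     (\<forall>w \<in> ancestors r p x \<inter> ancestors r p y. node_depth r p w \<le> node_depth r p z))"

text \<open>Leaves of the tree are the
  nodes Inl v for v a vertex; internal nodes are Inr i. Labels are natural numbers from a
  finite label set Lam; M t is the symmetric 0/1 matrix (as a bool-valued function) at node t.\<close>
definition has_tree_model :: "'a graph \<Rightarrow> nat \<Rightarrow> nat \<Rightarrow> bool" where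
  "has_tree_model G d m \<longleftrightarrow>
     (\<exists>(N :: ('a + nat) set) r p (Lam :: nat set) (lab :: 'a \<Rightarrow> nat)
        (M :: ('a + nat) \<Rightarrow> nat \<Rightarrow> nat \<Rightarrow> bool).
        rooted_tree N r p \<and>
        {t \<in> N. is_leaf N r p t} = Inl ` verts G \<and>
        (\<forall>x\<in>N. node_depth r p x \<le> d) \<and>
        finite Lam \<and> card Lam \<le> m \<and>
        (\<forall>v\<in>verts G. lab v \<in> Lam) \<and>
        (\<forall>t\<in>N. \<not> is_leaf N r p t \<longrightarrow> (\<forall>a\<in>Lam. \<forall>b\<in>Lam. M t a b = M t b a)) \<and>
        (\<forall>u\<in>verts G. \<forall>v\<in>verts G. u \<noteq> v \<longrightarrow>
           (adj G u v \<longleftrightarrow> M (lca r p (Inl u) (Inl v)) (lab u) (lab v))))"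

text \<open>Bounded shrubdepth; the (vertexless) empty graph has no tree (a tree has a node, hence
  a leaf), so it is exempted.\<close>
definition bounded_shrubdepth :: "nat graph set \<Rightarrow> bool" where
  "bounded_shrubdepth C \<longleftrightarrow>
     (\<exists>d m. \<forall>G\<in>C. verts G \<noteq> {} \<longrightarrow> has_tree_model G d m)"

datatype fo =
    FAdj nat nat
  | FEq nat nat
  | FNot fo
  | FAnd fo fo
  | FEx nat fo

fun fv :: "fo \<Rightarrow> nat set" where
  "fv (FAdj x y) = {x, y}"
| "fv (FEq x y) = {x, y}"
| "fv (FNot \<phi>) = fv \<phi>"
| "fv (FAnd \<phi> \<psi>) = fv \<phi> \<union> fv \<psi>"
| "fv (FEx x \<phi>) = fv \<phi> - {x}"

definition sentence :: "fo \<Rightarrow> bool" where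
  "sentence \<phi> \<longleftrightarrow> fv \<phi> = {}"

fun sat :: "'a graph \<Rightarrow> (nat \<Rightarrow> 'a) \<Rightarrow> fo \<Rightarrow> bool" where
  "sat G \<rho> (FAdj x y) = adj G (\<rho> x) (\<rho> y)"
| "sat G \<rho> (FEq x y) = (\<rho> x = \<rho> y)"
| "sat G \<rho> (FNot \<phi>) = (\<not> sat G \<rho> \<phi>)"
| "sat G \<rho> (FAnd \<phi> \<psi>) = (sat G \<rho> \<phi> \<and> sat G \<rho> \<psi>)"
| "sat G \<rho> (FEx x \<phi>) = (\<exists>a\<in>verts G. sat G (\<rho>(x := a)) \<phi>)"

text \<open>G models a sentence (the assignment is irrelevant for sentences).\<close>
definition models :: "'a graph \<Rightarrow> fo \<Rightarrow> bool" where
  "models G \<phi> \<longleftrightarrow> (\<forall>\<rho>. sat G \<rho> \<phi>)"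

end

theory Submission
  imports Defs "HOL-Library.Ramsey" "HOL-Library.Infinite_Set"
begin

text \<open>A tree-model of depth d with m labels is abstracted to the leaf set with, for each leaf,
  its label together with the matrices along its root path, and for each pair of leaves the
  depth D of their lowest common ancestor; over a label set that depends only on d and m this
  abstraction determines the graph. Splitting at the root into branches and using Nash-Williams'
  minimal bad sequence argument (finite subsets of an almost-full set are almost full under
  injective domination), induction on d shows that these abstractions, and hence the graphs of a
  class of bounded shrubdepth, are well-quasi-ordered by induced embedding. A minimal non-member
  of a hereditary class has such an abstraction of depth d + 1 (delete a vertex, model the rest,
  re-attach the vertex at a new root), so the minimal non-members form an antichain of a
  well-quasi-order and have bounded size. Membership is then the absence of finitely many induced
  subgraphs, each of which is expressed by an existential first-order sentence.\<close>

section \<open>Almost-full relations\<close>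

definition good :: "('a \<Rightarrow> 'a \<Rightarrow> bool) \<Rightarrow> (nat \<Rightarrow> 'a) \<Rightarrow> bool" where
  "good P f \<longleftrightarrow> (\<exists>i j. i < j \<and> P (f i) (f j))"

definition almost_full_on :: "('a \<Rightarrow> 'a \<Rightarrow> bool) \<Rightarrow> 'a set \<Rightarrow> bool" where
  "almost_full_on P A \<longleftrightarrow> (\<forall>f. (\<forall>i. f i \<in> A) \<longrightarrow> good P f)"

lemma almost_full_onD: "almost_full_on P A \<Longrightarrow> (\<And>i. f i \<in> A) \<Longrightarrow> good P f"
  unfolding almost_full_on_def by simp

lemma almost_full_on_subset: "almost_full_on P A \<Longrightarrow> B \<subseteq> A \<Longrightarrow> almost_full_on P B"
  unfolding almost_full_on_def by blast

lemma goodI: "i < j \<Longrightarrow> P (f i) (f j) \<Longrightarrow> good P f"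
  unfolding good_def by auto

lemma goodE: "good P f \<Longrightarrow> (\<And>i j. i < j \<Longrightarrow> P (f i) (f j) \<Longrightarrow> thesis) \<Longrightarrow> thesis"
  unfolding good_def by auto

lemma almost_full_on_hom:
  assumes "almost_full_on P A" and "\<And>x. x \<in> B \<Longrightarrow> h x \<in> A"
    and "\<And>x y. x \<in> B \<Longrightarrow> y \<in> B \<Longrightarrow> P (h x) (h y) \<Longrightarrow> Q x y"
  shows "almost_full_on Q B"
  unfolding almost_full_on_def
proof (intro allI impI)
  fix f :: "nat \<Rightarrow> 'b" assume f: "\<forall>i. f i \<in> B"
  then have "good P (h \<circ> f)" using almost_full_onD[OF assms(1)] assms(2) by simp
  then obtain i j where "i < j" "P (h (f i)) (h (f j))" by (auto elim: goodE)
  with f assms(3) show "good Q f" by (auto intro: goodI)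
qed

lemma almost_full_on_eq_finite:
  assumes "finite A"
  shows "almost_full_on (=) A"
  unfolding almost_full_on_def
proof (intro allI impI)
  fix f :: "nat \<Rightarrow> 'a" assume "\<forall>i. f i \<in> A"
  then have "finite (range f)" using assms finite_subset by (metis image_subsetI)
  then have "\<not> inj f" using finite_imageD infinite_UNIV_nat by auto
  then obtain i j where "i \<noteq> j" "f i = f j" unfolding inj_def by auto
  then show "good (=) f"
    by (cases "i < j") (auto intro: goodI[of i j] goodI[of j i])
qed

lemma almost_full_on_imp_homogeneous_subseq:
  fixes f :: "nat \<Rightarrow> 'a"
  assumes "almost_full_on P A" and "\<And>i. f i \<in> A"
  shows "\<exists>e :: nat \<Rightarrow> nat. strict_mono e \<and> (\<forall>k l. k < l \<longrightarrow> P (f (e k)) (f (e l)))"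
proof -
  txt \<open>Ramsey: colour a pair of indices by whether P holds from the smaller to the larger;
    almost-fullness excludes an infinite set coloured 1.\<close>
  define c where "c X = (if P (f (Min X)) (f (Max X)) then 0 else 1::nat)" for X :: "nat set"
  have "\<forall>x\<in>UNIV. \<forall>y\<in>UNIV. x \<noteq> y \<longrightarrow> c {x, y} < 2" unfolding c_def by simp
  from Ramsey2[OF infinite_UNIV_nat this] obtain Y t
    where Y: "infinite Y" and hom: "\<forall>x\<in>Y. \<forall>y\<in>Y. x \<noteq> y \<longrightarrow> c {x, y} = t" by auto
  define e where "e = enumerate Y"
  have e: "strict_mono e" "e k \<in> Y" for k
    unfolding e_def using Y by (simp_all add: strict_mono_def enumerate_in_set)
  have c_e: "c {e k, e l} = t \<and> c {e k, e l} = (if P (f (e k)) (f (e l)) then 0 else 1)"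
    if "k < l" for k l
  proof -
    have "e k < e l" using e(1) that by (simp add: strict_mono_less)
    then have "c {e k, e l} = (if P (f (e k)) (f (e l)) then 0 else 1)"
      unfolding c_def by (simp add: min_def max_def)
    moreover have "c {e k, e l} = t" using hom e(2) \<open>e k < e l\<close> by auto
    ultimately show ?thesis by simp
  qed
  obtain i j where "i < j" "P (f (e i)) (f (e j))"
    using almost_full_onD[OF assms(1), of "f \<circ> e"] assms(2) by (auto elim: goodE)
  then have "t = 0" using c_e by force
  then have "\<forall>k l. k < l \<longrightarrow> P (f (e k)) (f (e l))"
    using c_e by (metis zero_neq_one)
  with e(1) show ?thesis by (intro exI[of _ e]) simp
qed

definition minimal_bad :: "('a \<Rightarrow> nat) \<Rightarrow> ('a \<Rightarrow> 'a \<Rightarrow> bool) \<Rightarrow> 'a set \<Rightarrow> (nat \<Rightarrow> 'a) \<Rightarrow> bool" where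
  "minimal_bad \<mu> P A m \<longleftrightarrow> (\<forall>i. m i \<in> A) \<and> \<not> good P m \<and>
     (\<forall>n g. (\<forall>i. g i \<in> A) \<and> \<not> good P g \<and> (\<forall>i<n. g i = m i) \<longrightarrow> \<mu> (m n) \<le> \<mu> (g n))"

lemma minimal_badD:
  assumes "minimal_bad \<mu> P A m"
  shows "m i \<in> A" and "\<not> good P m"
    and "(\<And>i. g i \<in> A) \<Longrightarrow> \<not> good P g \<Longrightarrow> (\<And>i. i < n \<Longrightarrow> g i = m i) \<Longrightarrow> \<mu> (m n) \<le> \<mu> (g n)"
  using assms unfolding minimal_bad_def by simp_all

lemma ex_minimal_bad:
  fixes \<mu> :: "'a \<Rightarrow> nat"
  assumes "\<forall>i. f i \<in> A" and "\<not> good P f"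
  shows "\<exists>m. minimal_bad \<mu> P A m"
proof -
  define B where "B = {g. (\<forall>i. g i \<in> A) \<and> \<not> good P g}"
  define cands where "cands n g = {g' \<in> B. \<forall>i<n. g' i = g i}" for n g
  define step where
    "step n g = (SOME g'. g' \<in> cands n g \<and> (\<forall>h\<in>cands n g. \<mu> (g' n) \<le> \<mu> (h n)))" for n g
  have step_min: "step n g \<in> cands n g \<and> (\<forall>h\<in>cands n g. \<mu> (step n g n) \<le> \<mu> (h n))"
    if "g \<in> B" for n g
  proof -
    have "g \<in> cands n g" using that unfolding cands_def by simp
    then have "\<exists>g'. g' \<in> cands n g \<and> (\<forall>h\<in>cands n g. \<mu> (g' n) \<le> \<mu> (h n))"
      using ex_has_least_nat[of "\<lambda>h. h \<in> cands n g" g "\<lambda>h. \<mu> (h n)"] by blast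
    then show ?thesis unfolding step_def by (rule someI_ex)
  qed
  txt \<open>pre n is a bad sequence whose first n terms are already final.\<close>
  define pre where "pre = rec_nat f step"
  have pre_Suc: "pre (Suc n) = step n (pre n)" for n by (simp add: pre_def)
  have pre_B: "pre n \<in> B" for n
    by (induction n) (use assms step_min in \<open>auto simp: pre_def B_def cands_def\<close>)
  have pre_agree: "pre k i = pre n i" if "n \<le> k" "i < n" for n k i
    using that(1)
  proof (induction k rule: dec_induct)
    case (step k)
    then show ?case using step_min[OF pre_B, of k] that(2) by (simp add: pre_Suc cands_def)
  qed simp
  define m where "m n = pre (Suc n) n" for n
  have m_pre: "m i = pre k i" if "i < k" for i k
    using pre_agree[of "Suc i" k i] that unfolding m_def by simp
  have "m i \<in> A" for i using pre_B unfolding m_def B_def by simp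
  moreover have "\<not> good P m"
  proof
    assume "good P m"
    then obtain i j where "i < j" "P (m i) (m j)" by (rule goodE)
    then have "good P (pre (Suc j))" using m_pre[of i "Suc j"] m_pre[of j "Suc j"]
      by (auto intro: goodI)
    then show False using pre_B unfolding B_def by simp
  qed
  moreover have "\<mu> (m n) \<le> \<mu> (g n)"
    if "\<forall>i. g i \<in> A" "\<not> good P g" "\<forall>i<n. g i = m i" for n g
  proof -
    have "g \<in> cands n (pre n)" using that m_pre unfolding cands_def B_def by simp
    then show ?thesis using step_min[OF pre_B, of n] unfolding m_def pre_Suc by blast
  qed
  ultimately show ?thesis unfolding minimal_bad_def by blast
qed

text \<open>Nash-Williams: strictly smaller reducts of a minimal bad sequence cannot form a bad
  sequence, since splicing one into the sequence would undercut its minimality.\<close>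
lemma minimal_bad_reducts_almost_full:
  assumes m: "minimal_bad \<mu> P A m"
    and v: "\<And>n. v n \<in> A" "\<And>n. \<mu> (v n) < \<mu> (m n)"
    and up: "\<And>x n. P x (v n) \<Longrightarrow> P x (m n)"
  shows "almost_full_on P (range v)"
  unfolding almost_full_on_def
proof (intro allI impI)
  fix g :: "nat \<Rightarrow> 'a" assume "\<forall>i. g i \<in> range v"
  define \<phi> where "\<phi> k = inv v (g k)" for k
  have g: "g k = v (\<phi> k)" for k
    using \<open>\<forall>i. g i \<in> range v\<close> unfolding \<phi>_def by (simp add: f_inv_into_f)
  obtain k0 where k0: "\<And>k. \<phi> k0 \<le> \<phi> k"
    using ex_has_least_nat[of "\<lambda>_. True" 0 \<phi>] by blast
  define n0 where "n0 = \<phi> k0"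
  show "good P g"
  proof (rule ccontr)
    assume bad_g: "\<not> good P g"
    define f where "f i = (if i < n0 then m i else g (k0 + (i - n0)))" for i
    note m_A = minimal_badD(1)[OF m] and bad_m = minimal_badD(2)[OF m]
    have "f i \<in> A" for i unfolding f_def using m_A v(1) g by simp
    moreover have "\<not> P (f i) (f j)" if "i < j" for i j
    proof (cases "j < n0")
      case True
      then show ?thesis using bad_m goodI[of i j P m] that unfolding f_def by auto
    next
      case j: False
      show ?thesis
      proof (cases "i < n0")
        case True
        define k where "k = \<phi> (k0 + (j - n0))"
        have "i < k" using True k0[of "k0 + (j - n0)"] unfolding k_def n0_def by simp
        then have "\<not> P (m i) (m k)" using bad_m goodI[of i k P m] by blast
        then show ?thesis using True j up unfolding f_def g k_def by auto
      next
        case False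
        then have "k0 + (i - n0) < k0 + (j - n0)" using that by simp
        then have "\<not> P (g (k0 + (i - n0))) (g (k0 + (j - n0)))" using bad_g goodI by blast
        then show ?thesis using False j unfolding f_def by simp
      qed
    qed
    then have "\<not> good P f" by (metis goodE)
    ultimately have "\<mu> (m n0) \<le> \<mu> (f n0)"
      using minimal_badD(3)[OF m, of f n0] unfolding f_def by simp
    moreover have "f n0 = v n0" unfolding f_def g n0_def by simp
    ultimately show False using v(2)[of n0] by simp
  qed
qed

definition inj_emb :: "('a \<Rightarrow> 'b \<Rightarrow> bool) \<Rightarrow> 'a set \<Rightarrow> 'b set \<Rightarrow> bool" where
  "inj_emb P X Y \<longleftrightarrow> (\<exists>g. inj_on g X \<and> g ` X \<subseteq> Y \<and> (\<forall>x\<in>X. P x (g x)))"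

lemma inj_emb_empty: "inj_emb P {} Y"
  unfolding inj_emb_def by simp

lemma inj_emb_mono: "inj_emb P X Y \<Longrightarrow> Y \<subseteq> Y' \<Longrightarrow> inj_emb P X Y'"
  unfolding inj_emb_def by blast

lemma inj_emb_insert:
  assumes "inj_emb P X Y" "x \<notin> X" "y \<notin> Y" "P x y"
  shows "inj_emb P (insert x X) (insert y Y)"
proof -
  obtain g where g: "inj_on g X" "g ` X \<subseteq> Y" "\<forall>x\<in>X. P x (g x)"
    using assms(1) unfolding inj_emb_def by blast
  have "inj_on (g(x := y)) (insert x X)" using g assms(2,3) by (auto simp: inj_on_def)
  moreover have "(g(x := y)) ` insert x X \<subseteq> insert y Y" using g assms(2) by auto
  ultimately show ?thesis
    unfolding inj_emb_def using g assms(2,4) by (intro exI[of _ "g(x := y)"]) auto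
qed

text \<open>Remove one element from each set of a minimal bad sequence: the remainders are almost
  full, and along a homogeneous subsequence of the removed elements an embedding of remainders
  extends to the whole sets.\<close>
theorem almost_full_on_finite_subsets:
  assumes "almost_full_on P A"
  shows "almost_full_on (inj_emb P) {X. finite X \<and> X \<subseteq> A}" (is "almost_full_on _ ?F")
proof (rule ccontr)
  assume "\<not> almost_full_on (inj_emb P) ?F"
  then obtain f where "\<forall>i. f i \<in> ?F" "\<not> good (inj_emb P) f"
    unfolding almost_full_on_def by blast
  then obtain m where m: "minimal_bad card (inj_emb P) ?F m" by (metis ex_minimal_bad)
  note m_F = minimal_badD(1)[OF m] and bad_m = minimal_badD(2)[OF m]
  have "m n \<noteq> {}" for n
  proof
    assume "m n = {}"
    then have "good (inj_emb P) m" using goodI[of n "Suc n" "inj_emb P" m] inj_emb_empty[of P]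
      by simp
    then show False using bad_m by simp
  qed
  define a where "a n = (SOME x. x \<in> m n)" for n
  define v where "v n = m n - {a n}" for n
  have a: "a n \<in> m n" for n using \<open>m n \<noteq> {}\<close> unfolding a_def by (simp add: some_in_eq)
  have v_F: "v n \<in> ?F" for n using m_F unfolding v_def by auto
  have af_v: "almost_full_on (inj_emb P) (range v)"
  proof (rule minimal_bad_reducts_almost_full[OF m v_F])
    show "card (v n) < card (m n)" for n
      using m_F[of n] a[of n] card_Diff1_less[of "m n" "a n"] unfolding v_def by simp
    show "inj_emb P X (m n)" if "inj_emb P X (v n)" for X n
      using that inj_emb_mono unfolding v_def by blast
  qed
  obtain e :: "nat \<Rightarrow> nat" where e: "strict_mono e" "\<And>k l. k < l \<Longrightarrow> P (a (e k)) (a (e l))"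
    using almost_full_on_imp_homogeneous_subseq[OF assms, of a] a m_F by blast
  have "good (inj_emb P) (v \<circ> e)" by (rule almost_full_onD[OF af_v]) simp
  then obtain k l where "k < l" "inj_emb P (v (e k)) (v (e l))" by (auto elim: goodE)
  then have "inj_emb P (insert (a (e k)) (v (e k))) (insert (a (e l)) (v (e l)))"
    using e(2) by (intro inj_emb_insert) (auto simp: v_def)
  then have "inj_emb P (m (e k)) (m (e l))" using a unfolding v_def by (simp add: insert_absorb)
  moreover have "e k < e l" using e(1) \<open>k < l\<close> by (simp add: strict_mono_less)
  ultimately show False using bad_m by (auto intro: goodI)
qed

section \<open>Labelled lowest-common-ancestor structures\<close>

type_synonym ('v, 'l) lca_struct = "'v set \<times> ('v \<Rightarrow> 'l) \<times> ('v \<Rightarrow> 'v \<Rightarrow> nat)"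

text \<open>The abstraction of a tree-model of depth at most d: V are the leaves, L their labels, and
  D u v is the depth of the lowest common ancestor of u and v.\<close>
fun lca_model :: "nat \<Rightarrow> 'l set \<Rightarrow> ('v, 'l) lca_struct \<Rightarrow> bool" where
  "lca_model d S (V, L, D) \<longleftrightarrow> finite V \<and> L ` V \<subseteq> S \<and> (\<forall>u\<in>V. \<forall>v\<in>V. D u v = D v u) \<and>
     (\<forall>u\<in>V. \<forall>v\<in>V. \<forall>w\<in>V. u \<noteq> v \<longrightarrow> min (D u w) (D w v) \<le> D u v) \<and>
     (\<forall>u\<in>V. \<forall>v\<in>V. u \<noteq> v \<longrightarrow> D u v < d)"

fun lca_emb :: "('v, 'l) lca_struct \<Rightarrow> ('w, 'l) lca_struct \<Rightarrow> bool" where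
  "lca_emb (V, L, D) (V', L', D') \<longleftrightarrow> (\<exists>h. inj_on h V \<and> h ` V \<subseteq> V' \<and> (\<forall>u\<in>V. L' (h u) = L u) \<and>
     (\<forall>u\<in>V. \<forall>v\<in>V. u \<noteq> v \<longrightarrow> D' (h u) (h v) = D u v))"

lemma lca_modelD:
  assumes "lca_model d S (V, L, D)"
  shows "finite V" and "u \<in> V \<Longrightarrow> L u \<in> S" and "u \<in> V \<Longrightarrow> v \<in> V \<Longrightarrow> D u v = D v u"
    and "u \<in> V \<Longrightarrow> v \<in> V \<Longrightarrow> w \<in> V \<Longrightarrow> u \<noteq> v \<Longrightarrow> min (D u w) (D w v) \<le> D u v"
    and "u \<in> V \<Longrightarrow> v \<in> V \<Longrightarrow> u \<noteq> v \<Longrightarrow> D u v < d"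
  using assms by auto

declare lca_model.simps [simp del]

text \<open>Leaves below the same child of the root.\<close>
definition branch_rel :: "'v set \<Rightarrow> ('v \<Rightarrow> 'v \<Rightarrow> nat) \<Rightarrow> ('v \<times> 'v) set" where
  "branch_rel V D = {(u, v). u \<in> V \<and> v \<in> V \<and> (u = v \<or> 0 < D u v)}"

lemma equiv_branch_rel:
  assumes "lca_model d S (V, L, D)"
  shows "equiv V (branch_rel V D)"
proof (rule equivI)
  show "trans (branch_rel V D)"
  proof (rule transI)
    fix u v w assume "(u, v) \<in> branch_rel V D" "(v, w) \<in> branch_rel V D"
    moreover have "min (D u v) (D v w) \<le> D u w" if "u \<in> V" "v \<in> V" "w \<in> V" "u \<noteq> w"
      using lca_modelD(4)[OF assms that(1,3,2,4)] .
    ultimately show "(u, w) \<in> branch_rel V D" unfolding branch_rel_def by fastforce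
  qed
qed (use lca_modelD(3)[OF assms] in \<open>auto simp: branch_rel_def refl_on_def sym_def\<close>)

definition branches :: "('v, 'l) lca_struct \<Rightarrow> ('v, 'l) lca_struct set" where
  "branches X = (case X of (V, L, D) \<Rightarrow>
     (\<lambda>c. (c, L, \<lambda>u v. D u v - 1)) ` (V // branch_rel V D))"

lemma lca_model_branch:
  assumes X: "lca_model (Suc d) S (V, L, D)" and c: "c \<in> V // branch_rel V D"
  shows "lca_model d S (c, L, \<lambda>u v. D u v - 1)"
proof -
  have eq: "equiv V (branch_rel V D)" by (rule equiv_branch_rel[OF X])
  have cV: "c \<subseteq> V" by (rule in_quotient_imp_subset[OF eq c])
  have pos: "0 < D u v" if "u \<in> c" "v \<in> c" "u \<noteq> v" for u v
    using in_quotient_imp_in_rel[OF eq c, of u v] that unfolding branch_rel_def by auto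
  have inV: "x \<in> V" if "x \<in> c" for x using cV that by blast
  have "finite c" using finite_subset[OF cV lca_modelD(1)[OF X]] .
  moreover have "L u \<in> S" if "u \<in> c" for u
    using lca_modelD(2)[OF X inV[OF that]] .
  moreover have "D u v - 1 = D v u - 1" if "u \<in> c" "v \<in> c" for u v
    using lca_modelD(3)[OF X inV[OF that(1)] inV[OF that(2)]] by simp
  moreover have "min (D u w - 1) (D w v - 1) \<le> D u v - 1"
    if "u \<in> c" "v \<in> c" "w \<in> c" "u \<noteq> v" for u v w
    using lca_modelD(4)[OF X inV[OF that(1)] inV[OF that(2)] inV[OF that(3)] that(4)] by linarith
  moreover have "D u v - 1 < d" if "u \<in> c" "v \<in> c" "u \<noteq> v" for u v
    using lca_modelD(5)[OF X inV[OF that(1)] inV[OF that(2)] that(3)] pos[OF that] by linarith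
  ultimately show ?thesis unfolding lca_model.simps by blast
qed

lemma branches_lca_model:
  assumes "lca_model (Suc d) S X"
  shows "branches X \<in> {B. finite B \<and> B \<subseteq> {Y. lca_model d S Y}}"
proof (cases X rule: prod_cases3)
  case (fields V L D)
  have "finite (V // branch_rel V D)"
    using finite_quotient[OF lca_modelD(1)[OF assms[unfolded fields]], of "branch_rel V D"]
    unfolding branch_rel_def by auto
  then show ?thesis using lca_model_branch assms unfolding fields branches_def by auto
qed

lemma quotient_eq_Image:
  assumes "equiv A r" "X \<in> A // r" "x \<in> X"
  shows "X = r `` {x}"
  using assms by (metis Image_singleton_iff equiv_class_eq quotientE)

text \<open>D vanishes exactly across different branches, and inside a branch it is recovered from
  D - 1; so an injective matching of the branches with embeddings of matched branches glues to
  an embedding of the whole structure.\<close>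
lemma lca_emb_glue:
  assumes X: "lca_model (Suc d) S (V, L, D)" and Y: "lca_model (Suc d) S' (V', L', D')"
    and \<kappa>_inj: "inj_on \<kappa> (V // branch_rel V D)"
    and \<kappa>_into: "\<kappa> ` (V // branch_rel V D) \<subseteq> V' // branch_rel V' D'"
    and emb: "\<And>c. c \<in> V // branch_rel V D \<Longrightarrow>
                lca_emb (c, L, \<lambda>u v. D u v - 1) (\<kappa> c, L', \<lambda>u v. D' u v - 1)"
  shows "lca_emb (V, L, D) (V', L', D')"
proof -
  let ?R = "branch_rel V D" and ?R' = "branch_rel V' D'"
  have eq: "equiv V ?R" and eq': "equiv V' ?R'"
    using equiv_branch_rel X Y by blast+
  obtain H where H_inj: "\<And>c. c \<in> V // ?R \<Longrightarrow> inj_on (H c) c"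
    and H_into: "\<And>c. c \<in> V // ?R \<Longrightarrow> H c ` c \<subseteq> \<kappa> c"
    and H_lab: "\<And>c u. c \<in> V // ?R \<Longrightarrow> u \<in> c \<Longrightarrow> L' (H c u) = L u"
    and H_dist: "\<And>c u v. c \<in> V // ?R \<Longrightarrow> u \<in> c \<Longrightarrow> v \<in> c \<Longrightarrow> u \<noteq> v \<Longrightarrow>
                   D' (H c u) (H c v) - 1 = D u v - 1"
    using emb by simp metis
  define h where "h u = H (?R `` {u}) u" for u
  have cls: "?R `` {u} \<in> V // ?R" "u \<in> ?R `` {u}" if "u \<in> V" for u
    using that quotientI equiv_class_self[OF eq] by auto
  have h_class: "?R' `` {h u} = \<kappa> (?R `` {u}) \<and> h u \<in> V'" if "u \<in> V" for u
  proof -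
    have "h u \<in> \<kappa> (?R `` {u})" using H_into cls[OF that] unfolding h_def by blast
    moreover have "\<kappa> (?R `` {u}) \<in> V' // ?R'" using \<kappa>_into cls[OF that] by blast
    ultimately show ?thesis
      using quotient_eq_Image[OF eq'] in_quotient_imp_subset[OF eq'] by blast
  qed
  have same_branch: "(h u, h v) \<in> ?R' \<longleftrightarrow> (u, v) \<in> ?R" if "u \<in> V" "v \<in> V" for u v
  proof -
    have "(h u, h v) \<in> ?R' \<longleftrightarrow> \<kappa> (?R `` {u}) = \<kappa> (?R `` {v})"
      using h_class that eq_equiv_class_iff[OF eq'] by metis
    also have "\<dots> \<longleftrightarrow> ?R `` {u} = ?R `` {v}"
      using \<kappa>_inj cls that unfolding inj_on_def by metis
    also have "\<dots> \<longleftrightarrow> (u, v) \<in> ?R" using eq_equiv_class_iff[OF eq] that by blast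
    finally show ?thesis .
  qed
  have h_inj: "inj_on h V"
  proof (rule inj_onI)
    fix u v assume uv: "u \<in> V" "v \<in> V" "h u = h v"
    then have "(h u, h v) \<in> ?R'" using h_class equiv_class_self[OF eq'] by fastforce
    then have "?R `` {v} = ?R `` {u}" using same_branch uv eq_equiv_class_iff[OF eq] by blast
    then show "u = v" using H_inj[OF cls(1)[OF uv(1)]] cls uv unfolding h_def inj_on_def by metis
  qed
  have "D' (h u) (h v) = D u v" if uv: "u \<in> V" "v \<in> V" "u \<noteq> v" for u v
  proof (cases "(u, v) \<in> ?R")
    case True
    then have c: "?R `` {v} = ?R `` {u}" using eq_equiv_class_iff[OF eq] uv by blast
    have "h u \<noteq> h v" using h_inj uv unfolding inj_on_def by blast
    then have "0 < D u v" "0 < D' (h u) (h v)"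
      using True same_branch[OF uv(1,2)] uv unfolding branch_rel_def by auto
    moreover have "D' (h u) (h v) - 1 = D u v - 1"
      using H_dist[OF cls(1)[OF uv(1)] cls(2)[OF uv(1)] _ uv(3)] c cls(2)[OF uv(2)]
      unfolding h_def by simp
    ultimately show ?thesis by linarith
  next
    case False
    then show ?thesis using same_branch[OF uv(1,2)] h_class uv unfolding branch_rel_def by auto
  qed
  then show ?thesis using h_inj h_class H_lab cls unfolding h_def by auto
qed

lemma lca_emb_of_branches:
  assumes X: "lca_model (Suc d) S (V, L, D)" and Y: "lca_model (Suc d) S' (V', L', D')"
    and emb: "inj_emb lca_emb (branches (V, L, D)) (branches (V', L', D'))"
  shows "lca_emb (V, L, D) (V', L', D')"
proof -
  let ?R = "branch_rel V D" and ?R' = "branch_rel V' D'"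
  let ?b = "\<lambda>c. (c, L, \<lambda>u v. D u v - 1)" and ?b' = "\<lambda>c. (c, L', \<lambda>u v. D' u v - 1)"
  obtain g where g_inj: "inj_on g (?b ` (V // ?R))"
    and g_into: "g ` ?b ` (V // ?R) \<subseteq> ?b' ` (V' // ?R')"
    and g_emb: "\<forall>c\<in>V // ?R. lca_emb (?b c) (g (?b c))"
    using emb unfolding inj_emb_def branches_def by auto
  define \<kappa> where "\<kappa> c = fst (g (?b c))" for c
  have \<kappa>: "\<kappa> c \<in> V' // ?R' \<and> g (?b c) = ?b' (\<kappa> c)" if "c \<in> V // ?R" for c
  proof -
    have "g (?b c) \<in> ?b' ` (V' // ?R')" using g_into that by blast
    then show ?thesis unfolding \<kappa>_def by auto
  qed
  show ?thesis
  proof (rule lca_emb_glue[OF X Y])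
    show "inj_on \<kappa> (V // ?R)"
    proof (rule inj_onI)
      fix c c' assume "c \<in> V // ?R" "c' \<in> V // ?R" "\<kappa> c = \<kappa> c'"
      then have "g (?b c) = g (?b c')" using \<kappa> by metis
      then show "c = c'" using g_inj \<open>c \<in> V // ?R\<close> \<open>c' \<in> V // ?R\<close> unfolding inj_on_def by blast
    qed
    show "\<kappa> ` (V // ?R) \<subseteq> V' // ?R'" using \<kappa> by blast
    show "lca_emb (?b c) (?b' (\<kappa> c))" if "c \<in> V // ?R" for c
      using g_emb \<kappa> that by metis
  qed
qed

lemma lca_model_0_subsingleton:
  assumes "lca_model 0 S (V, L, D)" "u \<in> V" "v \<in> V"
  shows "u = v"
  using lca_modelD(5)[OF assms] by blast

lemma almost_full_on_lca_model_0:
  assumes "finite S"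
  shows "almost_full_on lca_emb {X :: ('v, 'l) lca_struct. lca_model 0 S X}"
proof (rule almost_full_on_hom[OF almost_full_on_eq_finite[of "Pow S"], of _ "\<lambda>(V, L, D). L ` V"])
  show "finite (Pow S)" using assms by simp
next
  fix X :: "('v, 'l) lca_struct" assume "X \<in> {X. lca_model 0 S X}"
  then show "(case X of (V, L, D) \<Rightarrow> L ` V) \<in> Pow S"
    by (cases X rule: prod_cases3) (auto dest: lca_modelD(2))
next
  fix X Y :: "('v, 'l) lca_struct"
  assume "X \<in> {X. lca_model 0 S X}" "Y \<in> {X. lca_model 0 S X}"
    and labels: "(case X of (V, L, D) \<Rightarrow> L ` V) = (case Y of (V, L, D) \<Rightarrow> L ` V)"
  then show "lca_emb X Y"
  proof (cases X rule: prod_cases3, cases Y rule: prod_cases3)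
    fix V L D V' L' D' assume XY: "X = (V, L, D)" "Y = (V', L', D')"
    show ?thesis
    proof (cases "V = {}")
      case False
      then obtain u where "u \<in> V" by blast
      then have "V = {u}"
        using lca_model_0_subsingleton[of S V L D] \<open>X \<in> _\<close> unfolding XY by auto
      moreover obtain v where "v \<in> V'" "L' v = L u"
        using labels \<open>u \<in> V\<close> unfolding XY by (metis case_prod_conv image_iff imageI)
      ultimately show ?thesis unfolding XY
        by (intro lca_emb.simps[THEN iffD2] exI[of _ "\<lambda>_. v"]) simp
    qed (simp add: XY)
  qed
qed

theorem almost_full_on_lca_model:
  assumes "finite S"
  shows "almost_full_on lca_emb {X :: ('v, 'l) lca_struct. lca_model d S X}"
proof (induction d)
  case 0
  show ?case by (rule almost_full_on_lca_model_0[OF assms])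
next
  case (Suc d)
  show ?case
  proof (rule almost_full_on_hom[OF almost_full_on_finite_subsets[OF Suc.IH], of _ branches])
    fix X :: "('v, 'l) lca_struct" assume "X \<in> {X. lca_model (Suc d) S X}"
    then show "branches X \<in> {B. finite B \<and> B \<subseteq> {Y. lca_model d S Y}}"
      using branches_lca_model by blast
  next
    fix X Y :: "('v, 'l) lca_struct"
    assume "X \<in> {X. lca_model (Suc d) S X}" "Y \<in> {X. lca_model (Suc d) S X}"
      and "inj_emb lca_emb (branches X) (branches Y)"
    then show "lca_emb X Y"
      using lca_emb_of_branches
      by (cases X rule: prod_cases3, cases Y rule: prod_cases3) (simp del: lca_emb.simps)
  qed
qed

section \<open>Tree-models\<close>

locale rtree =
  fixes N :: "'n set" and r :: 'n and p :: "'n \<Rightarrow> 'n"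
  assumes rooted: "rooted_tree N r p"
begin

abbreviation depth :: "'n \<Rightarrow> nat" where "depth \<equiv> node_depth r p"

lemma finite_nodes: "finite N"
  and parent_in: "x \<in> N \<Longrightarrow> x \<noteq> r \<Longrightarrow> p x \<in> N"
  and reaches_root: "x \<in> N \<Longrightarrow> \<exists>k. (p ^^ k) x = r"
  using rooted unfolding rooted_tree_def by blast+

lemma funpow_depth: "x \<in> N \<Longrightarrow> (p ^^ depth x) x = r"
  unfolding node_depth_def using reaches_root by (rule LeastI_ex)

lemma depth_le: "(p ^^ k) x = r \<Longrightarrow> depth x \<le> k"
  unfolding node_depth_def by (rule Least_le)

lemma depth_root: "depth r = 0"
  using depth_le[of 0 r] by simp

lemma funpow_in: "x \<in> N \<Longrightarrow> k \<le> depth x \<Longrightarrow> (p ^^ k) x \<in> N"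
proof (induction k)
  case (Suc k)
  have "(p ^^ k) x \<noteq> r" using depth_le[of k x] Suc.prems by auto
  then show ?case using parent_in Suc by simp
qed simp

lemma depth_funpow:
  assumes x: "x \<in> N" and k: "k \<le> depth x"
  shows "depth ((p ^^ k) x) = depth x - k"
proof -
  have "(p ^^ (depth x - k)) ((p ^^ k) x) = (p ^^ (depth x - k + k)) x"
    by (simp add: funpow_add)
  also have "\<dots> = r" using k funpow_depth[OF x] by simp
  finally have "depth ((p ^^ k) x) \<le> depth x - k" by (rule depth_le)
  moreover have "(p ^^ (depth ((p ^^ k) x) + k)) x = r"
    using funpow_depth[OF funpow_in[OF x k]] by (simp add: funpow_add)
  then have "depth x \<le> depth ((p ^^ k) x) + k" by (rule depth_le)
  ultimately show ?thesis by linarith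
qed

definition anc :: "'n \<Rightarrow> nat \<Rightarrow> 'n" where
  "anc x i = (p ^^ (depth x - i)) x"

lemma anc_in: "x \<in> N \<Longrightarrow> i \<le> depth x \<Longrightarrow> anc x i \<in> N"
  unfolding anc_def by (rule funpow_in) auto

lemma depth_anc: "x \<in> N \<Longrightarrow> i \<le> depth x \<Longrightarrow> depth (anc x i) = i"
  unfolding anc_def using depth_funpow[of x "depth x - i"] by simp

lemma anc_depth: "anc x (depth x) = x"
  unfolding anc_def by simp

lemma anc_0: "x \<in> N \<Longrightarrow> anc x 0 = r"
  unfolding anc_def using funpow_depth by simp

lemma anc_anc:
  assumes "x \<in> N" "i \<le> j" "j \<le> depth x"
  shows "anc (anc x j) i = anc x i"
proof -
  have "anc (anc x j) i = (p ^^ (j - i)) ((p ^^ (depth x - j)) x)"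
    using depth_anc[OF assms(1,3)] unfolding anc_def by simp
  also have "\<dots> = (p ^^ (j - i + (depth x - j))) x" by (simp add: funpow_add)
  also have "j - i + (depth x - j) = depth x - i" using assms(2,3) by simp
  finally show ?thesis unfolding anc_def .
qed

lemma ancestors_eq: "ancestors r p x = anc x ` {..depth x}"
proof
  show "ancestors r p x \<subseteq> anc x ` {..depth x}"
  proof
    fix z assume "z \<in> ancestors r p x"
    then obtain k where "z = (p ^^ k) x" "k \<le> depth x" unfolding ancestors_def by blast
    then have "z = anc x (depth x - k)" unfolding anc_def by simp
    then show "z \<in> anc x ` {..depth x}" by simp
  qed
qed (auto simp: ancestors_def anc_def)

definition lca_depth :: "'n \<Rightarrow> 'n \<Rightarrow> nat" where
  "lca_depth x y = Max {i. i \<le> depth x \<and> i \<le> depth y \<and> anc x i = anc y i}"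

lemma lca_depth_common_anc:
  assumes "x \<in> N" "y \<in> N"
  shows "lca_depth x y \<le> depth x" "lca_depth x y \<le> depth y"
    "anc x (lca_depth x y) = anc y (lca_depth x y)"
proof -
  have "lca_depth x y \<in> {i. i \<le> depth x \<and> i \<le> depth y \<and> anc x i = anc y i}"
    unfolding lca_depth_def using anc_0 assms by (intro Max_in) auto
  then show "lca_depth x y \<le> depth x" "lca_depth x y \<le> depth y"
    "anc x (lca_depth x y) = anc y (lca_depth x y)"
    by simp_all
qed

lemma lca_depth_greatest: "i \<le> depth x \<Longrightarrow> i \<le> depth y \<Longrightarrow> anc x i = anc y i \<Longrightarrow> i \<le> lca_depth x y"
  unfolding lca_depth_def by (intro Max_ge) auto

lemma lca_depth_commute: "lca_depth x y = lca_depth y x"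
  unfolding lca_depth_def by (rule arg_cong[where f = Max]) auto

lemma anc_eq_iff_le_lca_depth:
  assumes "x \<in> N" "y \<in> N" "i \<le> depth x" "i \<le> depth y"
  shows "anc x i = anc y i \<longleftrightarrow> i \<le> lca_depth x y"
proof
  assume "i \<le> lca_depth x y"
  then show "anc x i = anc y i"
    using lca_depth_common_anc[OF assms(1,2)] anc_anc[OF assms(1)] anc_anc[OF assms(2)] by metis
qed (use lca_depth_greatest assms in blast)

lemma lca_eq_anc_lca_depth:
  assumes "x \<in> N" "y \<in> N"
  shows "lca r p x y = anc x (lca_depth x y)"
proof -
  let ?CA = "ancestors r p x \<inter> ancestors r p y"
  note m = lca_depth_common_anc[OF assms]
  have in_CA: "anc x (lca_depth x y) \<in> ?CA" unfolding ancestors_eq using m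
    by (metis atMost_iff image_eqI IntI)
  have CA: "depth w \<le> lca_depth x y \<and> w = anc x (depth w)" if w: "w \<in> ?CA" for w
  proof -
    obtain i j where ij: "i \<le> depth x" "w = anc x i" "j \<le> depth y" "w = anc y j"
      using w unfolding ancestors_eq by blast
    then have "depth w = i" "depth w = j"
      using depth_anc[OF assms(1) ij(1)] depth_anc[OF assms(2) ij(3)] by simp_all
    then show ?thesis using lca_depth_greatest[of i x y] ij by auto
  qed
  have depth_m: "depth (anc x (lca_depth x y)) = lca_depth x y" using depth_anc[OF assms(1) m(1)] .
  show ?thesis unfolding lca_def
  proof (rule the_equality)
    fix z assume "z \<in> ?CA \<and> (\<forall>w\<in>?CA. depth w \<le> depth z)"
    then show "z = anc x (lca_depth x y)" using in_CA CA depth_m by (metis le_antisym)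
  qed (use in_CA CA depth_m in simp)
qed

lemma lca_depth_ultra:
  assumes "x \<in> N" "y \<in> N" "w \<in> N"
  shows "min (lca_depth x w) (lca_depth w y) \<le> lca_depth x y"
proof -
  let ?k = "min (lca_depth x w) (lca_depth w y)"
  note a = lca_depth_common_anc[OF assms(1,3)] and b = lca_depth_common_anc[OF assms(3,2)]
  have "anc x ?k = anc w ?k" using anc_eq_iff_le_lca_depth[of x w ?k] assms a by simp
  also have "\<dots> = anc y ?k" using anc_eq_iff_le_lca_depth[of w y ?k] assms b by simp
  finally show ?thesis using anc_eq_iff_le_lca_depth[of x y ?k] assms a b by simp
qed

text \<open>A leaf is not a proper ancestor, so its lowest common ancestor with any other node lies
  strictly above it.\<close>
lemma lca_depth_less_depth_leaf:
  assumes x: "x \<in> N" and y: "y \<in> N" and "x \<noteq> y" and leaf: "is_leaf N r p x"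
  shows "lca_depth x y < depth x"
proof (rule ccontr)
  assume "\<not> lca_depth x y < depth x"
  then have eq: "lca_depth x y = depth x" using lca_depth_common_anc(1)[OF x y] by simp
  then have le: "depth x \<le> depth y" and x_anc: "anc y (depth x) = x"
    using lca_depth_common_anc[OF x y] anc_depth[of x] by auto
  have "depth x \<noteq> depth y" using x_anc anc_depth[of y] \<open>x \<noteq> y\<close> by metis
  then have lt: "Suc (depth x) \<le> depth y" using le by simp
  define c where "c = anc y (Suc (depth x))"
  have "c \<in> N" "depth c = Suc (depth x)" using anc_in[OF y lt] depth_anc[OF y lt] c_def by auto
  then have "c \<noteq> r" using depth_root by auto
  have "p c = (p ^^ (Suc (depth y - Suc (depth x)))) y" unfolding c_def anc_def by simp
  also have "Suc (depth y - Suc (depth x)) = depth y - depth x" using lt by simp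
  finally have "p c = x" using x_anc unfolding anc_def by simp
  then have "c \<in> children N r p x" unfolding children_def using \<open>c \<in> N\<close> \<open>c \<noteq> r\<close> by simp
  then show False using leaf unfolding is_leaf_def by blast
qed


lemma lca_model_lca_depth:
  assumes "finite V" "L ` V \<subseteq> S" "inj_on \<iota> V"
    and leaf: "\<And>u. u \<in> V \<Longrightarrow> \<iota> u \<in> N \<and> is_leaf N r p (\<iota> u)"
    and depth: "\<And>x. x \<in> N \<Longrightarrow> depth x \<le> d"
  shows "lca_model d S (V, L, \<lambda>u v. lca_depth (\<iota> u) (\<iota> v))"
proof -
  have "lca_depth (\<iota> u) (\<iota> v) < d" if "u \<in> V" "v \<in> V" "u \<noteq> v" for u v
    using lca_depth_less_depth_leaf[of "\<iota> u" "\<iota> v"] leaf[OF that(1)] leaf[OF that(2)]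
      depth[of "\<iota> u"]
      inj_onD[OF assms(3)] that by fastforce
  moreover have "min (lca_depth (\<iota> u) (\<iota> w)) (lca_depth (\<iota> w) (\<iota> v)) \<le> lca_depth (\<iota> u) (\<iota> v)"
    if "u \<in> V" "v \<in> V" "w \<in> V" for u v w
    using lca_depth_ultra leaf that by blast
  ultimately show ?thesis using assms(1,2) lca_depth_commute unfolding lca_model.simps by blast
qed
end

definition adj_encoded ::
    "(nat \<Rightarrow> 'l \<Rightarrow> 'l \<Rightarrow> bool) \<Rightarrow> 'a graph \<Rightarrow> ('a \<Rightarrow> 'l) \<Rightarrow> ('a \<Rightarrow> 'a \<Rightarrow> nat) \<Rightarrow> bool" where
  "adj_encoded F G L D \<longleftrightarrow>
     (\<forall>u\<in>verts G. \<forall>v\<in>verts G. u \<noteq> v \<longrightarrow> (adj G u v \<longleftrightarrow> F (D u v) (L u) (L v)))"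

definition lca_rep :: "nat \<Rightarrow> 'l set \<Rightarrow> (nat \<Rightarrow> 'l \<Rightarrow> 'l \<Rightarrow> bool) \<Rightarrow> 'a graph \<Rightarrow> bool" where
  "lca_rep d S F G \<longleftrightarrow> (\<exists>L D. lca_model d S (verts G, L, D) \<and> adj_encoded F G L D)"

text \<open>A leaf remembers its label (renumbered into {0..<m}) together with the matrices at all of
  its ancestors, indexed by depth; the matrix at the lowest common ancestor is then read off
  from the path of either leaf.\<close>
definition path_labels :: "nat \<Rightarrow> nat \<Rightarrow> (nat \<times> (nat \<Rightarrow> nat \<Rightarrow> nat \<Rightarrow> bool)) set" where
  "path_labels d m = {0..<m} \<times> {M. \<forall>i a b. M i a b \<longrightarrow> i \<le> d \<and> a < m \<and> b < m}"

definition path_adj ::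
    "nat \<Rightarrow> nat \<times> (nat \<Rightarrow> nat \<Rightarrow> nat \<Rightarrow> bool) \<Rightarrow> nat \<times> (nat \<Rightarrow> nat \<Rightarrow> nat \<Rightarrow> bool) \<Rightarrow> bool" where
  "path_adj k x y = snd x k (fst x) (fst y)"

lemma finite_path_labels: "finite (path_labels d m)"
proof -
  let ?Ms = "{M :: nat \<Rightarrow> nat \<Rightarrow> nat \<Rightarrow> bool. \<forall>i a b. M i a b \<longrightarrow> i \<le> d \<and> a < m \<and> b < m}"
  let ?graph = "\<lambda>M :: nat \<Rightarrow> nat \<Rightarrow> nat \<Rightarrow> bool. {(i, a, b). M i a b}"
  have "inj_on ?graph ?Ms"
  proof (rule inj_onI)
    fix M M' :: "nat \<Rightarrow> nat \<Rightarrow> nat \<Rightarrow> bool" assume "?graph M = ?graph M'"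
    then have "(i, a, b) \<in> ?graph M \<longleftrightarrow> (i, a, b) \<in> ?graph M'" for i a b by simp
    then show "M = M'" by (intro ext) simp
  qed
  moreover have "?graph ` ?Ms \<subseteq> Pow ({..d} \<times> {..<m} \<times> {..<m})" by auto
  ultimately have "finite ?Ms" by (rule inj_on_finite) simp
  then show ?thesis unfolding path_labels_def by simp
qed

lemma ex_renumbering:
  assumes "finite A" "card A \<le> m"
  obtains e :: "'a \<Rightarrow> nat" and e' where "\<And>x. x \<in> A \<Longrightarrow> e x < m" "\<And>x. x \<in> A \<Longrightarrow> e' (e x) = x"
proof -
  obtain e where e: "bij_betw e A {0..<card A}" using ex_bij_betw_finite_nat[OF assms(1)] by blast
  have "e x < m" if "x \<in> A" for x
  proof -
    have "e x \<in> {0..<card A}" using e that unfolding bij_betw_def by blast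
    then show ?thesis using assms(2) by simp
  qed
  moreover have "the_inv_into A e (e x) = x" if "x \<in> A" for x
    using e that unfolding bij_betw_def by (simp add: the_inv_into_f_f)
  ultimately show ?thesis by (rule that)
qed

lemma lca_rep_of_tree_model:
  assumes "has_tree_model G d m"
  shows "lca_rep d (path_labels d m) path_adj G"
proof -
  obtain N :: "('a + nat) set" and r p and Lam :: "nat set" and lab :: "'a \<Rightarrow> nat"
    and M :: "('a + nat) \<Rightarrow> nat \<Rightarrow> nat \<Rightarrow> bool" where
    rt: "rooted_tree N r p" and leaves: "{t \<in> N. is_leaf N r p t} = Inl ` verts G" and
    depth: "\<forall>x\<in>N. node_depth r p x \<le> d" and Lam: "finite Lam" "card Lam \<le> m" and
    lab: "\<forall>v\<in>verts G. lab v \<in> Lam" and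
    adjM: "\<forall>u\<in>verts G. \<forall>v\<in>verts G. u \<noteq> v \<longrightarrow>
             (adj G u v \<longleftrightarrow> M (lca r p (Inl u) (Inl v)) (lab u) (lab v))"
    using assms unfolding has_tree_model_def by (elim exE conjE) (rule that; assumption)
  interpret rtree N r p by unfold_locales (rule rt)
  obtain e e' where e_less: "\<And>x. x \<in> Lam \<Longrightarrow> e x < m" and e'_e: "\<And>x. x \<in> Lam \<Longrightarrow> e' (e x) = x"
    using ex_renumbering[OF Lam] by blast
  have leaf: "\<And>u. u \<in> verts G \<Longrightarrow> Inl u \<in> N \<and> is_leaf N r p (Inl u)"
    using leaves by blast
  define L where
    "L u = (e (lab u), \<lambda>i a b. i \<le> d \<and> a < m \<and> b < m \<and> M (anc (Inl u) i) (e' a) (e' b))" for u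
  define D where "D u v = lca_depth (Inl u) (Inl v)" for u v
  have "finite (Inl ` verts G :: ('a + nat) set)"
    using leaves finite_nodes by (metis (no_types, lifting) finite_subset mem_Collect_eq subsetI)
  then have "finite (verts G)" by (rule finite_imageD) simp
  moreover have "L ` verts G \<subseteq> path_labels d m"
    unfolding L_def path_labels_def using e_less lab by auto
  ultimately have model: "lca_model d (path_labels d m) (verts G, L, D)"
    unfolding D_def using depth leaf by (intro lca_model_lca_depth) auto
  moreover have "adj_encoded path_adj G L D"
    unfolding adj_encoded_def
  proof (intro ballI impI)
    fix u v assume uv: "u \<in> verts G" "v \<in> verts G" "u \<noteq> v"
    have "path_adj (D u v) (L u) (L v) \<longleftrightarrow> M (anc (Inl u) (D u v)) (lab u) (lab v)"
      unfolding path_adj_def L_def using lca_modelD(5)[OF model uv] e_less lab e'_e uv by simp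
    also have "anc (Inl u) (D u v) = lca r p (Inl u) (Inl v)"
      unfolding D_def using lca_eq_anc_lca_depth leaf uv by simp
    finally show "adj G u v \<longleftrightarrow> path_adj (D u v) (L u) (L v)" using adjM uv by simp
  qed
  ultimately show ?thesis unfolding lca_rep_def by blast
qed

section \<open>Induced embeddings\<close>

lemma graph_adjD: "graph G \<Longrightarrow> adj G u v \<Longrightarrow> u \<in> verts G \<and> v \<in> verts G \<and> u \<noteq> v \<and> adj G v u"
  unfolding graph_def by blast

lemma graph_irrefl: "graph G \<Longrightarrow> \<not> adj G u u"
  unfolding graph_def by blast

lemma hereditary_isoD: "hereditary C \<Longrightarrow> G \<in> C \<Longrightarrow> graph H \<Longrightarrow> graph_iso f G H \<Longrightarrow> H \<in> C"
  unfolding hereditary_def by blast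

lemma hereditary_induced_subgraphD: "hereditary C \<Longrightarrow> G \<in> C \<Longrightarrow> induced_subgraph H G \<Longrightarrow> H \<in> C"
  unfolding hereditary_def by blast

definition induce :: "'a graph \<Rightarrow> 'a set \<Rightarrow> 'a graph" where
  "induce G X = (X, \<lambda>u v. u \<in> X \<and> v \<in> X \<and> adj G u v)"

lemma verts_induce [simp]: "verts (induce G X) = X"
  unfolding induce_def verts_def by simp

lemma adj_induce [simp]: "adj (induce G X) u v \<longleftrightarrow> u \<in> X \<and> v \<in> X \<and> adj G u v"
  unfolding induce_def adj_def by simp

lemma induced_subgraph_induce: "X \<subseteq> verts G \<Longrightarrow> induced_subgraph (induce G X) G"
  unfolding induced_subgraph_def by (simp add: fun_eq_iff)

lemma graph_induce: "graph G \<Longrightarrow> X \<subseteq> verts G \<Longrightarrow> graph (induce G X)"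
  unfolding graph_def using finite_subset by auto

lemma induce_verts: "graph G \<Longrightarrow> induce G (verts G) = G"
  using graph_adjD[of G] unfolding induce_def verts_def adj_def
    by (auto simp: prod_eq_iff fun_eq_iff)

lemma induce_induce: "Y \<subseteq> X \<Longrightarrow> induce (induce G X) Y = induce G Y"
  unfolding induce_def adj_def by (auto simp: fun_eq_iff)

definition induced_emb :: "('a \<Rightarrow> 'b) \<Rightarrow> 'a graph \<Rightarrow> 'b graph \<Rightarrow> bool" where
  "induced_emb f H G \<longleftrightarrow> inj_on f (verts H) \<and> f ` verts H \<subseteq> verts G \<and>
     (\<forall>u\<in>verts H. \<forall>v\<in>verts H. adj H u v \<longleftrightarrow> adj G (f u) (f v))"

abbreviation induced_embeds :: "'a graph \<Rightarrow> 'b graph \<Rightarrow> bool" where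
  "induced_embeds H G \<equiv> \<exists>f. induced_emb f H G"

lemma graph_iso_induce_image:
  assumes "induced_emb f H G"
  shows "graph_iso (the_inv_into (verts H) f) (induce G (f ` verts H)) H"
  unfolding graph_iso_def
proof (intro conjI ballI)
  have inj: "inj_on f (verts H)" using assms unfolding induced_emb_def by blast
  then show "bij_betw (the_inv_into (verts H) f) (verts (induce G (f ` verts H))) (verts H)"
    by (simp add: bij_betw_the_inv_into inj_on_imp_bij_betw)
  fix x y assume "x \<in> verts (induce G (f ` verts H))" "y \<in> verts (induce G (f ` verts H))"
  then obtain a b where ab: "a \<in> verts H" "b \<in> verts H" "x = f a" "y = f b" by auto
  then have "the_inv_into (verts H) f x = a" "the_inv_into (verts H) f y = b"
    using the_inv_into_f_f[OF inj] by simp_all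
  then show "adj (induce G (f ` verts H)) x y \<longleftrightarrow>
      adj H (the_inv_into (verts H) f x) (the_inv_into (verts H) f y)"
    using assms ab unfolding induced_emb_def by simp
qed

lemma hereditary_induced_emb:
  assumes "hereditary C" "G \<in> C" "graph H" "induced_emb f H G"
  shows "H \<in> C"
proof -
  have "f ` verts H \<subseteq> verts G" using assms(4) unfolding induced_emb_def by blast
  then have "induce G (f ` verts H) \<in> C"
    using hereditary_induced_subgraphD[OF assms(1,2)] induced_subgraph_induce by blast
  then show ?thesis
    using hereditary_isoD[OF assms(1) _ assms(3) graph_iso_induce_image[OF assms(4)]] by simp
qed

lemma induced_emb_of_lca_emb:
  assumes "graph G" "graph G'" "adj_encoded F G L D" "adj_encoded F G' L' D'"
    and "lca_emb (verts G, L, D) (verts G', L', D')"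
  shows "induced_embeds G G'"
proof -
  obtain h where h: "inj_on h (verts G)" "h ` verts G \<subseteq> verts G'" "\<forall>u\<in>verts G. L' (h u) = L u"
    "\<forall>u\<in>verts G. \<forall>v\<in>verts G. u \<noteq> v \<longrightarrow> D' (h u) (h v) = D u v"
    using assms(5) by auto
  have "adj G u v \<longleftrightarrow> adj G' (h u) (h v)" if uv: "u \<in> verts G" "v \<in> verts G" for u v
  proof (cases "u = v")
    case True
    then show ?thesis using graph_irrefl[OF assms(1)] graph_irrefl[OF assms(2)] by simp
  next
    case False
    then have "h u \<noteq> h v" "h u \<in> verts G'" "h v \<in> verts G'"
      using h(1,2) uv unfolding inj_on_def by auto
    then show ?thesis using assms(3,4) h(3,4) uv False unfolding adj_encoded_def by simp
  qed
  then show ?thesis using h(1,2) unfolding induced_emb_def by blast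
qed

theorem almost_full_on_lca_rep:
  assumes "finite S"
  shows "almost_full_on induced_embeds {G :: 'a graph. graph G \<and> lca_rep d S F G}"
proof -
  define rep where "rep G = (SOME LD. lca_model d S (verts G, fst LD, snd LD) \<and>
    adj_encoded F G (fst LD) (snd LD))" for G :: "'a graph"
  have rep: "lca_model d S (verts G, fst (rep G), snd (rep G)) \<and>
      adj_encoded F G (fst (rep G)) (snd (rep G))"
    if "lca_rep d S F G" for G
    using that unfolding lca_rep_def rep_def by (intro someI_ex[where P = "\<lambda>LD. _ LD \<and> _ LD"]) auto
  show ?thesis
  proof (rule almost_full_on_hom[OF almost_full_on_lca_model[OF assms, of d],
        of _ "\<lambda>G. (verts G, fst (rep G), snd (rep G))"])
    show "(verts G, fst (rep G), snd (rep G)) \<in> {X. lca_model d S X}"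
      if "G \<in> {G. graph G \<and> lca_rep d S F G}" for G
      using rep that by simp
    show "induced_embeds G H"
      if "G \<in> {G. graph G \<and> lca_rep d S F G}" "H \<in> {G. graph G \<and> lca_rep d S F G}"
        and "lca_emb (verts G, fst (rep G), snd (rep G)) (verts H, fst (rep H), snd (rep H))"
      for G H
      using induced_emb_of_lca_emb rep that by blast
  qed
qed

section \<open>Minimal non-members\<close>

lemma lca_rep_empty: "verts G = {} \<Longrightarrow> lca_rep d S F G"
  unfolding lca_rep_def lca_model.simps adj_encoded_def by simp

definition ext_labels :: "'l set \<Rightarrow> ('l \<times> bool) option set" where
  "ext_labels S = insert None (Some ` (S \<times> UNIV))"

definition ext_adj ::
    "(nat \<Rightarrow> 'l \<Rightarrow> 'l \<Rightarrow> bool) \<Rightarrow> nat \<Rightarrow> ('l \<times> bool) option \<Rightarrow> ('l \<times> bool) option \<Rightarrow> bool" where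
  "ext_adj F k x y = (case (x, y) of
       (None, None) \<Rightarrow> False
     | (None, Some b) \<Rightarrow> snd b
     | (Some a, None) \<Rightarrow> snd a
     | (Some a, Some b) \<Rightarrow> 0 < k \<and> F (k - 1) (fst a) (fst b))"

lemma finite_ext_labels: "finite S \<Longrightarrow> finite (ext_labels S)"
  unfolding ext_labels_def by simp

text \<open>Putting v back: the old tree is pushed one level down below a new root, v is attached
  to the new root, and every other vertex records in its label whether it is adjacent to v.\<close>
lemma lca_rep_insert_vertex:
  assumes G: "graph G" and v: "v \<in> verts G"
    and rep: "lca_rep d S F (induce G (verts G - {v}))"
  shows "lca_rep (Suc d) (ext_labels S) (ext_adj F) G"
proof -
  obtain L D where LD: "lca_model d S (verts G - {v}, L, D)"
    and enc: "adj_encoded F (induce G (verts G - {v})) L D"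
    using rep unfolding lca_rep_def by auto
  define L' where "L' u = (if u = v then None else Some (L u, adj G u v))" for u
  define D' where "D' a b = (if a = v \<or> b = v then 0 else Suc (D a b))" for a b
  have "lca_model (Suc d) (ext_labels S) (verts G, L', D')"
    unfolding lca_model.simps
  proof (intro conjI ballI impI)
    show "finite (verts G)" using G unfolding graph_def by blast
    show "L' ` verts G \<subseteq> ext_labels S"
      using lca_modelD(2)[OF LD] unfolding L'_def ext_labels_def by auto
  next
    fix a b assume "a \<in> verts G" "b \<in> verts G"
    then show "D' a b = D' b a" using lca_modelD(3)[OF LD] unfolding D'_def by auto
  next
    fix a b w assume "a \<in> verts G" "b \<in> verts G" "w \<in> verts G" "a \<noteq> b"
    then show "min (D' a w) (D' w b) \<le> D' a b"
      using lca_modelD(4)[OF LD, of a b w] unfolding D'_def by auto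
  next
    fix a b assume "a \<in> verts G" "b \<in> verts G" "a \<noteq> b"
    then show "D' a b < Suc d" using lca_modelD(5)[OF LD, of a b] unfolding D'_def by auto
  qed
  moreover have "adj_encoded (ext_adj F) G L' D'"
    unfolding adj_encoded_def
  proof (intro ballI impI)
    fix a b assume ab: "a \<in> verts G" "b \<in> verts G" "a \<noteq> b"
    have "adj G a b \<longleftrightarrow> adj G b a" using graph_adjD[OF G] by blast
    then show "adj G a b \<longleftrightarrow> ext_adj F (D' a b) (L' a) (L' b)"
      using enc ab unfolding adj_encoded_def L'_def D'_def ext_adj_def by auto
  qed
  ultimately show ?thesis unfolding lca_rep_def by blast
qed

definition minimal_non_member :: "'a graph set \<Rightarrow> 'a graph \<Rightarrow> bool" where
  "minimal_non_member C H \<longleftrightarrow> graph H \<and> H \<notin> C \<and> (\<forall>X. X \<subset> verts H \<longrightarrow> induce H X \<in> C)"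

lemma lca_rep_minimal_non_member:
  assumes C: "\<forall>G\<in>C. lca_rep d S F G" and H: "minimal_non_member C H"
  shows "lca_rep (Suc d) (ext_labels S) (ext_adj F) H"
proof (cases "verts H = {}")
  case False
  then obtain v where v: "v \<in> verts H" by blast
  have "graph H" using H unfolding minimal_non_member_def by blast
  moreover have "induce H (verts H - {v}) \<in> C"
    using H v unfolding minimal_non_member_def by blast
  ultimately show ?thesis using lca_rep_insert_vertex[OF _ v] C by blast
qed (rule lca_rep_empty)

lemma ex_minimal_non_member:
  assumes "graph G" "G \<notin> C"
  shows "\<exists>X\<subseteq>verts G. minimal_non_member C (induce G X)"
proof -
  define bad where "bad X \<longleftrightarrow> X \<subseteq> verts G \<and> induce G X \<notin> C" for X
  have "bad (verts G)" unfolding bad_def using assms induce_verts[OF assms(1)] by simp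
  then obtain X where X: "bad X" and min: "\<And>Y. bad Y \<Longrightarrow> card X \<le> card Y"
    using ex_has_least_nat[of bad "verts G" card] by blast
  have fin: "finite X" using X assms(1) finite_subset unfolding bad_def graph_def by blast
  have "induce G Y \<in> C" if "Y \<subset> X" for Y
    using min[of Y] psubset_card_mono[OF fin that] that X unfolding bad_def by auto
  then have "minimal_non_member C (induce G X)"
    using X graph_induce[OF assms(1)] induce_induce[of _ X G]
    unfolding bad_def minimal_non_member_def by auto
  then show ?thesis using X unfolding bad_def by blast
qed

text \<open>Otherwise there are minimal non-members of strictly increasing size; one embeds into a
  later one, hence into a proper induced subgraph of it, which lies in C.\<close>
lemma minimal_non_member_card_bounded:
  assumes C: "hereditary C" and af: "almost_full_on induced_embeds {H. minimal_non_member C H}"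
  shows "\<exists>B. \<forall>H. minimal_non_member C H \<longrightarrow> card (verts H) \<le> B"
proof (rule ccontr)
  let ?sizes = "(\<lambda>H. card (verts H)) ` {H. minimal_non_member C H}"
  assume "\<not> ?thesis"
  then have "infinite ?sizes" by (auto simp: finite_nat_set_iff_bounded_le)
  define H where "H k = (SOME H. minimal_non_member C H \<and> card (verts H) = enumerate ?sizes k)"
    for k
  have H: "minimal_non_member C (H k) \<and> card (verts (H k)) = enumerate ?sizes k" for k
  proof -
    obtain G where "minimal_non_member C G" "card (verts G) = enumerate ?sizes k"
      using enumerate_in_set[OF \<open>infinite ?sizes\<close>, of k] by auto
    then show ?thesis unfolding H_def by (rule someI[where P = "\<lambda>H. _ H \<and> _ H", OF conjI])
  qed
  obtain i j h where ij: "i < j" and h: "induced_emb h (H i) (H j)"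
    using almost_full_onD[OF af, of H] H by (auto elim: goodE)
  have "card (h ` verts (H i)) < card (verts (H j))"
    using h H[of i] H[of j] enumerate_mono[OF ij \<open>infinite ?sizes\<close>]
    unfolding induced_emb_def by (simp add: card_image)
  then have "h ` verts (H i) \<subset> verts (H j)" using h unfolding induced_emb_def by auto
  then have "induce (H j) (h ` verts (H i)) \<in> C" using H[of j] unfolding minimal_non_member_def
    by blast
  then have "H i \<in> C"
    using hereditary_isoD[OF C _ _ graph_iso_induce_image[OF h]] H[of i]
    unfolding minimal_non_member_def by blast
  then show False using H[of i] unfolding minimal_non_member_def by blast
qed

section \<open>First-order definability\<close>

definition fo_true :: fo where
  "fo_true = FNot (FEx 0 (FNot (FEq 0 0)))"

definition fo_conj :: "fo list \<Rightarrow> fo" where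
  "fo_conj \<phi>s = foldr FAnd \<phi>s fo_true"

lemma sat_fo_conj: "sat G \<rho> (fo_conj \<phi>s) \<longleftrightarrow> (\<forall>\<phi>\<in>set \<phi>s. sat G \<rho> \<phi>)"
  by (induction \<phi>s) (simp_all add: fo_conj_def fo_true_def)

lemma fv_fo_conj: "fv (fo_conj \<phi>s) = (\<Union>\<phi>\<in>set \<phi>s. fv \<phi>)"
  by (induction \<phi>s) (simp_all add: fo_conj_def fo_true_def)

lemma fv_foldr_FEx: "fv (foldr FEx xs \<phi>) = fv \<phi> - set xs"
  by (induction xs) auto

lemma sat_foldr_FEx:
  "sat G \<rho> (foldr FEx xs \<phi>) \<longleftrightarrow>
     (\<exists>\<sigma>. (\<forall>x\<in>set xs. \<sigma> x \<in> verts G) \<and> (\<forall>x. x \<notin> set xs \<longrightarrow> \<sigma> x = \<rho> x) \<and> sat G \<sigma> \<phi>)"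
proof (induction xs arbitrary: \<rho>)
  case Nil
  have "(\<forall>x. \<sigma> x = \<rho> x) \<longleftrightarrow> \<sigma> = \<rho>" for \<sigma> :: "nat \<Rightarrow> 'a" by auto
  then show ?case by simp
next
  case (Cons x xs)
  show ?case
  proof
    assume "sat G \<rho> (foldr FEx (x # xs) \<phi>)"
    then obtain a \<sigma> where a: "a \<in> verts G" and \<sigma>: "\<forall>y\<in>set xs. \<sigma> y \<in> verts G"
      "\<forall>y. y \<notin> set xs \<longrightarrow> \<sigma> y = (\<rho>(x := a)) y" "sat G \<sigma> \<phi>"
      using Cons.IH by auto
    have "\<sigma> x \<in> verts G" using a \<sigma>(1,2) by (cases "x \<in> set xs") auto
    with \<sigma> show "\<exists>\<sigma>. (\<forall>y\<in>set (x # xs). \<sigma> y \<in> verts G) \<and> (\<forall>y. y \<notin> set (x # xs) \<longrightarrow> \<sigma> y = \<rho> y) \<and>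
        sat G \<sigma> \<phi>"
      by (intro exI[of _ \<sigma>]) auto
  next
    assume "\<exists>\<sigma>. (\<forall>y\<in>set (x # xs). \<sigma> y \<in> verts G) \<and> (\<forall>y. y \<notin> set (x # xs) \<longrightarrow> \<sigma> y = \<rho> y) \<and>
        sat G \<sigma> \<phi>"
    then obtain \<sigma> where \<sigma>: "\<forall>y\<in>set (x # xs). \<sigma> y \<in> verts G"
      "\<forall>y. y \<notin> set (x # xs) \<longrightarrow> \<sigma> y = \<rho> y" "sat G \<sigma> \<phi>" by blast
    then have "\<forall>y. y \<notin> set xs \<longrightarrow> \<sigma> y = (\<rho>(x := \<sigma> x)) y" by auto
    then have "sat G (\<rho>(x := \<sigma> x)) (foldr FEx xs \<phi>)"
      unfolding Cons.IH using \<sigma> by (intro exI[of _ \<sigma>]) simp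
    moreover have "\<sigma> x \<in> verts G" using \<sigma> by simp
    ultimately show "sat G \<rho> (foldr FEx (x # xs) \<phi>)" by auto
  qed
qed

definition adj_type_fo :: "nat graph \<Rightarrow> nat \<Rightarrow> nat \<Rightarrow> fo" where
  "adj_type_fo H i j = FAnd (FNot (FEq i j)) (if adj H i j then FAdj i j else FNot (FAdj i j))"

lemma sat_adj_type_fo:
  "sat G \<sigma> (adj_type_fo H i j) \<longleftrightarrow> \<sigma> i \<noteq> \<sigma> j \<and> (adj G (\<sigma> i) (\<sigma> j) \<longleftrightarrow> adj H i j)"
  by (auto simp: adj_type_fo_def)

definition induced_copy_fo :: "nat graph \<Rightarrow> fo" where
  "induced_copy_fo H = (let n = card (verts H) in
     foldr FEx [0..<n] (fo_conj [adj_type_fo H i j. i \<leftarrow> [0..<n], j \<leftarrow> [0..<n], i \<noteq> j]))"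

lemma fv_induced_copy_fo: "fv (induced_copy_fo H) = {}"
proof -
  have "fv (adj_type_fo H i j) = {i, j}" for i j by (auto simp: adj_type_fo_def)
  then show ?thesis unfolding induced_copy_fo_def Let_def fv_foldr_FEx fv_fo_conj by auto
qed

lemma sat_induced_copy_fo_iff:
  assumes "verts H = {0..<n}"
  shows "sat G \<rho> (induced_copy_fo H) \<longleftrightarrow>
    (\<exists>\<sigma>. (\<forall>i\<in>{0..<n}. \<sigma> i \<in> verts G) \<and> (\<forall>i. i \<notin> {0..<n} \<longrightarrow> \<sigma> i = \<rho> i) \<and>
      (\<forall>i<n. \<forall>j<n. i \<noteq> j \<longrightarrow> \<sigma> i \<noteq> \<sigma> j \<and> (adj G (\<sigma> i) (\<sigma> j) \<longleftrightarrow> adj H i j)))"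
proof -
  have n: "card (verts H) = n" using assms by simp
  have conj: "sat G \<sigma> (fo_conj [adj_type_fo H i j. i \<leftarrow> [0..<n], j \<leftarrow> [0..<n], i \<noteq> j]) \<longleftrightarrow>
      (\<forall>i<n. \<forall>j<n. i \<noteq> j \<longrightarrow> \<sigma> i \<noteq> \<sigma> j \<and> (adj G (\<sigma> i) (\<sigma> j) \<longleftrightarrow> adj H i j))" for \<sigma>
    unfolding sat_fo_conj by (auto simp: sat_adj_type_fo)
  show ?thesis unfolding induced_copy_fo_def Let_def n sat_foldr_FEx set_upt conj ..
qed

lemma sat_induced_copy_fo:
  assumes "graph H" "graph G" "verts H = {0..<n}"
  shows "sat G \<rho> (induced_copy_fo H) \<longleftrightarrow> induced_embeds H G"
  unfolding sat_induced_copy_fo_iff[OF assms(3)]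
proof
  assume "\<exists>\<sigma>. (\<forall>i\<in>{0..<n}. \<sigma> i \<in> verts G) \<and> (\<forall>i. i \<notin> {0..<n} \<longrightarrow> \<sigma> i = \<rho> i) \<and>
    (\<forall>i<n. \<forall>j<n. i \<noteq> j \<longrightarrow> \<sigma> i \<noteq> \<sigma> j \<and> (adj G (\<sigma> i) (\<sigma> j) \<longleftrightarrow> adj H i j))"
  then obtain \<sigma> where \<sigma>: "\<forall>i\<in>{0..<n}. \<sigma> i \<in> verts G"
    "\<forall>i<n. \<forall>j<n. i \<noteq> j \<longrightarrow> \<sigma> i \<noteq> \<sigma> j \<and> (adj G (\<sigma> i) (\<sigma> j) \<longleftrightarrow> adj H i j)"
    by (elim exE conjE)
  have "inj_on \<sigma> (verts H)" using \<sigma>(2) unfolding assms(3) by (intro inj_onI) auto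
  moreover have "adj H i j \<longleftrightarrow> adj G (\<sigma> i) (\<sigma> j)" if "i \<in> verts H" "j \<in> verts H" for i j
  proof (cases "i = j")
    case True
    then show ?thesis using graph_irrefl[OF assms(1)] graph_irrefl[OF assms(2)] by simp
  qed (use \<sigma>(2) that assms(3) in auto)
  ultimately have "induced_emb \<sigma> H G" using \<sigma>(1) unfolding induced_emb_def assms(3) by blast
  then show "\<exists>f. induced_emb f H G" by blast
next
  assume "\<exists>f. induced_emb f H G"
  then obtain f where f: "inj_on f {0..<n}" "f ` {0..<n} \<subseteq> verts G"
    "\<forall>i\<in>{0..<n}. \<forall>j\<in>{0..<n}. adj H i j \<longleftrightarrow> adj G (f i) (f j)"
    unfolding induced_emb_def assms(3) by blast
  define \<sigma> where "\<sigma> i = (if i < n then f i else \<rho> i)" for i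
  have "\<sigma> i \<noteq> \<sigma> j \<and> (adj G (\<sigma> i) (\<sigma> j) \<longleftrightarrow> adj H i j)" if "i < n" "j < n" "i \<noteq> j" for i j
  proof -
    have "f i \<noteq> f j" using inj_onD[OF f(1)] that by auto
    moreover have "adj G (f i) (f j) \<longleftrightarrow> adj H i j" using f(3) that by simp
    ultimately show ?thesis using that unfolding \<sigma>_def by simp
  qed
  moreover have "\<sigma> i \<in> verts G" if "i \<in> {0..<n}" for i using f(2) that unfolding \<sigma>_def by auto
  moreover have "\<sigma> i = \<rho> i" if "i \<notin> {0..<n}" for i using that unfolding \<sigma>_def by simp
  ultimately show "\<exists>\<sigma>. (\<forall>i\<in>{0..<n}. \<sigma> i \<in> verts G) \<and> (\<forall>i. i \<notin> {0..<n} \<longrightarrow> \<sigma> i = \<rho> i) \<and>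
    (\<forall>i<n. \<forall>j<n. i \<noteq> j \<longrightarrow> \<sigma> i \<noteq> \<sigma> j \<and> (adj G (\<sigma> i) (\<sigma> j) \<longleftrightarrow> adj H i j))"
    by blast
qed

definition small_non_members :: "nat graph set \<Rightarrow> nat \<Rightarrow> nat graph set" where
  "small_non_members C B = {H. graph H \<and> H \<notin> C \<and> (\<exists>n\<le>B. verts H = {0..<n})}"

lemma finite_small_non_members: "finite (small_non_members C B)"
proof -
  let ?mk = "\<lambda>(n, E). ({0..<n}, \<lambda>u v. (u, v) \<in> E) :: nat graph"
  have "small_non_members C B \<subseteq> ?mk ` ({..B} \<times> Pow ({..<B} \<times> {..<B}))"
  proof
    fix H assume "H \<in> small_non_members C B"
    then obtain n where H: "graph H" "n \<le> B" "verts H = {0..<n}"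
      unfolding small_non_members_def by blast
    define E where "E = {(u, v). adj H u v}"
    have "E \<subseteq> {..<B} \<times> {..<B}"
    proof
      fix e assume "e \<in> E"
      then obtain a b where "e = (a, b)" "adj H a b" unfolding E_def by blast
      then show "e \<in> {..<B} \<times> {..<B}" using graph_adjD[OF H(1), of a b] H(2,3) by auto
    qed
    moreover have "H = ?mk (n, E)"
      using H(3) unfolding E_def verts_def adj_def by (simp add: prod_eq_iff)
    ultimately show "H \<in> ?mk ` ({..B} \<times> Pow ({..<B} \<times> {..<B}))" using H(2) by blast
  qed
  then show ?thesis by (rule finite_subset) simp
qed

lemma ex_initial_segment_copy:
  assumes "graph G" "X \<subseteq> verts G"
  shows "\<exists>(H :: nat graph) f. graph H \<and> verts H = {0..<card X} \<and>
           graph_iso f H (induce G X) \<and> induced_emb f H G"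
proof -
  have "finite X" using assms finite_subset unfolding graph_def by blast
  then obtain f where f: "bij_betw f {0..<card X} X"
    using ex_bij_betw_nat_finite by blast
  define H :: "nat graph"
    where "H = ({0..<card X}, \<lambda>i j. i < card X \<and> j < card X \<and> adj G (f i) (f j))"
  have vH: "verts H = {0..<card X}"
    and aH: "adj H i j \<longleftrightarrow> i < card X \<and> j < card X \<and> adj G (f i) (f j)"
    for i j unfolding H_def verts_def adj_def by simp_all
  have f_in: "f i \<in> X" if "i < card X" for i using f that unfolding bij_betw_def by auto
  have "i < card X \<and> j < card X \<and> i \<noteq> j \<and> adj H j i" if "adj H i j" for i j
  proof -
    have "i < card X" "j < card X" "adj G (f i) (f j)" using aH that by simp_all
    moreover have "f i \<noteq> f j" "adj G (f j) (f i)"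
      using graph_adjD[OF assms(1) \<open>adj G (f i) (f j)\<close>] by simp_all
    ultimately show ?thesis using aH by auto
  qed
  then have "graph H" unfolding graph_def vH by auto
  moreover have "graph_iso f H (induce G X)"
    using f f_in unfolding graph_iso_def vH aH by simp
  moreover have "induced_emb f H G"
    using f f_in assms(2) unfolding induced_emb_def bij_betw_def vH aH by auto
  ultimately show ?thesis using vH by blast
qed

text \<open>A non-member contains a minimal non-member, whose copy on an initial segment of the
  naturals is one of the finitely many small non-members.\<close>
lemma member_iff_no_small_non_member:
  assumes C: "hereditary C" and B: "\<forall>H. minimal_non_member C H \<longrightarrow> card (verts H) \<le> B"
    and G: "graph G"
  shows "G \<in> C \<longleftrightarrow> (\<forall>H\<in>small_non_members C B. \<not> induced_embeds H G)"
proof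
  assume "G \<in> C"
  then show "\<forall>H\<in>small_non_members C B. \<not> induced_embeds H G"
    using hereditary_induced_emb[OF C] unfolding small_non_members_def by blast
next
  assume no_emb: "\<forall>H\<in>small_non_members C B. \<not> induced_embeds H G"
  show "G \<in> C"
  proof (rule ccontr)
    assume "G \<notin> C"
    then obtain X where X: "X \<subseteq> verts G" and min: "minimal_non_member C (induce G X)"
      using ex_minimal_non_member[OF G] by blast
    obtain H f where H: "graph H" "verts H = {0..<card X}" and iso: "graph_iso f H (induce G X)"
      and emb: "induced_emb f H G"
      using ex_initial_segment_copy[OF G X] by blast
    have "H \<notin> C"
      using hereditary_isoD[OF C _ graph_induce[OF G X] iso] min
      unfolding minimal_non_member_def by blast
    moreover have "card X \<le> B" using B min by fastforce
    ultimately have "H \<in> small_non_members C B" using H unfolding small_non_members_def by blast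
    then show False using no_emb emb by blast
  qed
qed

lemma ex_sentence_excluding_induced:
  fixes \<H> :: "nat graph set"
  assumes "finite \<H>" and "\<forall>H\<in>\<H>. graph H \<and> (\<exists>n. verts H = {0..<n})"
  shows "\<exists>\<phi>. sentence \<phi> \<and>
    (\<forall>G :: nat graph. graph G \<longrightarrow> (models G \<phi> \<longleftrightarrow> (\<forall>H\<in>\<H>. \<not> induced_embeds H G)))"
proof -
  obtain Hs where Hs: "set Hs = \<H>" using finite_list[OF assms(1)] by blast
  define \<phi> where "\<phi> = fo_conj (map (\<lambda>H. FNot (induced_copy_fo H)) Hs)"
  have "sentence \<phi>" unfolding sentence_def \<phi>_def fv_fo_conj by (simp add: fv_induced_copy_fo)
  moreover have "models G \<phi> \<longleftrightarrow> (\<forall>H\<in>\<H>. \<not> induced_embeds H G)" if G: "graph G" for G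
  proof -
    have "sat G \<rho> (induced_copy_fo H) \<longleftrightarrow> induced_embeds H G" if "H \<in> \<H>" for H \<rho>
      using assms(2) that sat_induced_copy_fo[OF _ G] by blast
    then show ?thesis unfolding models_def \<phi>_def sat_fo_conj Hs[symmetric] by simp
  qed
  ultimately show ?thesis by blast
qed

theorem corollary3p19:
  fixes C :: "nat graph set"
  assumes "hereditary C" and "bounded_shrubdepth C"
  shows "\<exists>\<phi>. sentence \<phi> \<and> (\<forall>G :: nat graph. graph G \<longrightarrow> (G \<in> C \<longleftrightarrow> models G \<phi>))"
proof -
  obtain d m where "\<forall>G\<in>C. verts G \<noteq> {} \<longrightarrow> has_tree_model G d m"
    using assms(2) unfolding bounded_shrubdepth_def by blast
  then have "\<forall>G\<in>C. lca_rep d (path_labels d m) path_adj G"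
    by (metis lca_rep_of_tree_model lca_rep_empty)
  then have "minimal_non_member C H \<Longrightarrow>
      graph H \<and> lca_rep (Suc d) (ext_labels (path_labels d m)) (ext_adj path_adj) H" for H
    using lca_rep_minimal_non_member[of C] unfolding minimal_non_member_def by simp
  then have "almost_full_on induced_embeds {H. minimal_non_member C H}"
    by (intro almost_full_on_subset[OF
          almost_full_on_lca_rep[OF finite_ext_labels[OF finite_path_labels]]])
      auto
  then obtain B where B: "\<forall>H. minimal_non_member C H \<longrightarrow> card (verts H) \<le> B"
    using minimal_non_member_card_bounded[OF assms(1)] by blast
  have small: "\<forall>H\<in>small_non_members C B. graph H \<and> (\<exists>n. verts H = {0..<n})"
    unfolding small_non_members_def by auto
  obtain \<phi> where "sentence \<phi>"
    and "\<forall>G :: nat graph. graph G \<longrightarrow> (models G \<phi> \<longleftrightarrow> (\<forall>H\<in>small_non_members C B. \<not> induced_embeds H G))"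
    using ex_sentence_excluding_induced[OF finite_small_non_members small] by blast
  then show ?thesis using member_iff_no_small_non_member[OF assms(1) B] by metis
qed

end
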